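(* Let $G$ be a well-bicovered graph with adjacent vertices $u$ and $v$, and let $H$ be a bipartite graph (disjoint from $G$) with adjacent vertices $u'$ and $v'$. Let $F$ be the graph formed from the disjoint union of $G$ and $H$ by identifying $u$ with $u'$ and $v$ with $v'$. Then $F$ is well-bicovered.
   Context: All graphs are finite and simple; "subgraph" means induced subgraph. A graph is well-bicovered if every vertex-inclusion-maximal induced bipartite subgraph has the same order. *)

theory Defs
  imports Main
begin

definition simple_graph :: "'a set \<Rightarrow> ('a \<Rightarrow> 'a \<Rightarrow> bool) \<Rightarrow> bool" where
  "simple_graph V E \<longleftrightarrow> finite V \<and> (\<forall>x y. E x y \<longrightarrow> x \<in> V \<and> y \<in> V)
     \<and> (\<forall>x y. E x y \<longrightarrow> E y x) \<and> (\<forall>x. \<not> E x x)"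

definition induced_bipartite :: "('a \<Rightarrow> 'a \<Rightarrow> bool) \<Rightarrow> 'a set \<Rightarrow> bool" where
  "induced_bipartite E S \<longleftrightarrow> (\<exists>A. \<forall>x\<in>S. \<forall>y\<in>S. E x y \<longrightarrow> (x \<in> A \<longleftrightarrow> y \<notin> A))"

definition bipartite :: "'a set \<Rightarrow> ('a \<Rightarrow> 'a \<Rightarrow> bool) \<Rightarrow> bool" where
  "bipartite V E \<longleftrightarrow> induced_bipartite E V"

definition maximal_bipartite_set :: "'a set \<Rightarrow> ('a \<Rightarrow> 'a \<Rightarrow> bool) \<Rightarrow> 'a set \<Rightarrow> bool" where
  "maximal_bipartite_set V E S \<longleftrightarrow> S \<subseteq> V \<and> induced_bipartite E S \<and>
     (\<forall>T. T \<subseteq> V \<and> induced_bipartite E T \<and> S \<subseteq> T \<longrightarrow> T = S)"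

definition well_bicovered :: "'a set \<Rightarrow> ('a \<Rightarrow> 'a \<Rightarrow> bool) \<Rightarrow> bool" where
  "well_bicovered V E \<longleftrightarrow> (\<forall>S T. maximal_bipartite_set V E S \<and> maximal_bipartite_set V E T
     \<longrightarrow> card S = card T)"

text \<open>Gluing: vertices of G become Inl, vertices of H become Inr, except that
  u' is identified with u and v' with v.\<close>
definition glue_map :: "'a \<Rightarrow> 'a \<Rightarrow> 'b \<Rightarrow> 'b \<Rightarrow> 'b \<Rightarrow> 'a + 'b" where
  "glue_map u v u' v' y = (if y = u' then Inl u else if y = v' then Inl v else Inr y)"

definition glue_V :: "'a set \<Rightarrow> 'a \<Rightarrow> 'a \<Rightarrow> 'b set \<Rightarrow> 'b \<Rightarrow> 'b \<Rightarrow> ('a + 'b) set" where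
  "glue_V VG u v VH u' v' = Inl ` VG \<union> glue_map u v u' v' ` VH"

definition glue_E :: "('a \<Rightarrow> 'a \<Rightarrow> bool) \<Rightarrow> 'a \<Rightarrow> 'a \<Rightarrow> ('b \<Rightarrow> 'b \<Rightarrow> bool) \<Rightarrow> 'b \<Rightarrow> 'b
    \<Rightarrow> ('a + 'b) \<Rightarrow> ('a + 'b) \<Rightarrow> bool" where
  "glue_E EG u v EH u' v' x y \<longleftrightarrow>
     (\<exists>a b. x = Inl a \<and> y = Inl b \<and> EG a b) \<or>
     (\<exists>a b. x = glue_map u v u' v' a \<and> y = glue_map u v u' v' b \<and> EH a b)"

end

theory Submission
  imports Defs
begin

text \<open>A set S of vertices of the glued graph F induces a bipartite subgraph exactly when its
  part T = Inl -` S coming from G does: 2-colourings of T and of H can both be normalised so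
  that u, u' get one colour and v, v' the other, and then they agree on the identified
  vertices. Hence the vertices of H other than u' and v' lie in every maximal induced bipartite
  subgraph of F, whose part in G is a maximal induced bipartite subgraph of G; so every maximal
  one has order |V(H)| - 2 plus the common order of those of G.\<close>

lemma induced_bipartite_vimage:
  assumes "\<And>x y. E x y \<Longrightarrow> E' (f x) (f y)" and "induced_bipartite E' S"
  shows "induced_bipartite E (f -` S)"
proof -
  obtain A where "\<forall>x\<in>S. \<forall>y\<in>S. E' x y \<longrightarrow> (x \<in> A \<longleftrightarrow> y \<notin> A)"
    using assms(2) unfolding induced_bipartite_def by blast
  then have "\<forall>x\<in>f -` S. \<forall>y\<in>f -` S. E x y \<longrightarrow> (x \<in> f -` A \<longleftrightarrow> y \<notin> f -` A)"
    using assms(1) by auto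
  then show ?thesis unfolding induced_bipartite_def by blast
qed

lemma induced_bipartite_obtain_colouring:
  assumes "induced_bipartite E S" and "E u v" and "u \<noteq> v"
  obtains A where "\<forall>x\<in>S. \<forall>y\<in>S. E x y \<longrightarrow> (x \<in> A \<longleftrightarrow> y \<notin> A)" and "u \<in> A" and "v \<notin> A"
proof -
  obtain A where A: "\<forall>x\<in>S. \<forall>y\<in>S. E x y \<longrightarrow> (x \<in> A \<longleftrightarrow> y \<notin> A)"
    using assms(1) unfolding induced_bipartite_def by blast
  define A' where "A' = (if u \<in> S \<and> u \<notin> A \<or> v \<in> S \<and> v \<in> A then - A else A)"
  have A': "\<forall>x\<in>S. \<forall>y\<in>S. E x y \<longrightarrow> (x \<in> A' \<longleftrightarrow> y \<notin> A')"
    using A unfolding A'_def by auto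
  have "u \<in> S \<Longrightarrow> u \<in> A'" "v \<in> S \<Longrightarrow> v \<notin> A'"
    using A assms(2) unfolding A'_def by auto
  \<comment> \<open>outside S the colour is free, so u and v may be moved to the required sides\<close>
  then show thesis
    using that[of "insert u (A' - {v})"] A' assms(3) by auto
qed

lemma glue_map_mem_colouring:
  assumes "u \<in> A \<longleftrightarrow> u' \<in> B" and "v \<in> A \<longleftrightarrow> v' \<in> B"
  shows "glue_map u v u' v' y \<in> A <+> B \<longleftrightarrow> y \<in> B"
  using assms by (auto simp: glue_map_def)

lemma induced_bipartite_glue_iff:
  assumes "EG u v" and "u \<noteq> v" and "EH u' v'" and "u' \<noteq> v'"
    and "bipartite VH EH" and "\<And>x y. EH x y \<Longrightarrow> x \<in> VH \<and> y \<in> VH"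
  shows "induced_bipartite (glue_E EG u v EH u' v') S \<longleftrightarrow> induced_bipartite EG (Inl -` S)"
proof
  assume "induced_bipartite (glue_E EG u v EH u' v') S"
  then show "induced_bipartite EG (Inl -` S)"
    by (rule induced_bipartite_vimage[rotated]) (auto simp: glue_E_def)
next
  assume "induced_bipartite EG (Inl -` S)"
  then obtain A where A: "\<forall>x\<in>Inl -` S. \<forall>y\<in>Inl -` S. EG x y \<longrightarrow> (x \<in> A \<longleftrightarrow> y \<notin> A)"
    and "u \<in> A" "v \<notin> A"
    using assms(1,2) by (rule induced_bipartite_obtain_colouring)
  obtain B where B: "\<forall>x\<in>VH. \<forall>y\<in>VH. EH x y \<longrightarrow> (x \<in> B \<longleftrightarrow> y \<notin> B)"
    and "u' \<in> B" "v' \<notin> B"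
    using assms(5,3,4) unfolding bipartite_def by (rule induced_bipartite_obtain_colouring)
  have glue_col: "glue_map u v u' v' y \<in> A <+> B \<longleftrightarrow> y \<in> B" for y
    by (rule glue_map_mem_colouring) (use \<open>u \<in> A\<close> \<open>v \<notin> A\<close> \<open>u' \<in> B\<close> \<open>v' \<notin> B\<close> in auto)
  have "x \<in> A <+> B \<longleftrightarrow> y \<notin> A <+> B"
    if "x \<in> S" "y \<in> S" "glue_E EG u v EH u' v' x y" for x y
    using that(3) unfolding glue_E_def
  proof (elim disjE exE conjE)
    fix a b assume "x = Inl a" "y = Inl b" "EG a b"
    then show ?thesis using A that(1,2) by auto
  next
    fix a b assume "x = glue_map u v u' v' a" "y = glue_map u v u' v' b" "EH a b"
    then show ?thesis using B glue_col assms(6) by metis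
  qed
  then show "induced_bipartite (glue_E EG u v EH u' v') S"
    unfolding induced_bipartite_def by blast
qed

lemma maximal_bipartite_set_Plus:
  assumes V: "V = VG <+> W"
    and bip: "\<And>S. induced_bipartite E S \<longleftrightarrow> induced_bipartite EG (Inl -` S)"
    and S: "maximal_bipartite_set V E S"
  shows "S = (Inl -` S) <+> W" and "maximal_bipartite_set VG EG (Inl -` S)"
proof -
  have extend: "T <+> W = S"
    if "T \<subseteq> VG" and "induced_bipartite EG T" and "S \<subseteq> T <+> W" for T
  proof -
    have "Inl -` (T <+> W) = T" by auto
    then have "induced_bipartite E (T <+> W)" using bip that(2) by simp
    moreover have "T <+> W \<subseteq> V" using V that(1) by auto
    ultimately show ?thesis using S that(3) unfolding maximal_bipartite_set_def by blast
  qed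
  have sub: "Inl -` S \<subseteq> VG" and bipG: "induced_bipartite EG (Inl -` S)"
    using S V bip unfolding maximal_bipartite_set_def by auto
  show S_eq: "S = (Inl -` S) <+> W"
    by (rule extend[OF sub bipG, symmetric]) (use S V in \<open>auto simp: maximal_bipartite_set_def\<close>)
  show "maximal_bipartite_set VG EG (Inl -` S)"
    unfolding maximal_bipartite_set_def
  proof (intro conjI allI impI sub bipG)
    fix T assume T: "T \<subseteq> VG \<and> induced_bipartite EG T \<and> Inl -` S \<subseteq> T"
    have "S \<subseteq> T <+> W"
      using T by (subst S_eq) (auto simp: Plus_def)
    then have "T <+> W = S"
      using T by (intro extend) auto
    then show "T = Inl -` S" by auto
  qed
qed

lemma well_bicovered_Plus:
  assumes V: "V = VG <+> W"
    and bip: "\<And>S. induced_bipartite E S \<longleftrightarrow> induced_bipartite EG (Inl -` S)"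
    and "finite VG" and "finite W" and "well_bicovered VG EG"
  shows "well_bicovered V E"
proof -
  have card_eq: "card S = card (Inl -` S) + card W" and max: "maximal_bipartite_set VG EG (Inl -` S)"
    if "maximal_bipartite_set V E S" for S
  proof -
    show max: "maximal_bipartite_set VG EG (Inl -` S)"
      using maximal_bipartite_set_Plus[OF V bip that] by blast
    have "finite (Inl -` S)"
      using max \<open>finite VG\<close> finite_subset unfolding maximal_bipartite_set_def by blast
    then show "card S = card (Inl -` S) + card W"
      by (subst maximal_bipartite_set_Plus(1)[OF V bip that]) (simp add: card_Plus \<open>finite W\<close>)
  qed
  show ?thesis
    using \<open>well_bicovered VG EG\<close> card_eq max unfolding well_bicovered_def by metis
qed

lemma glue_V_eq_Plus:
  assumes "u \<in> VG" and "v \<in> VG" and "u' \<in> VH" and "v' \<in> VH"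
  shows "glue_V VG u v VH u' v' = VG <+> (VH - {u', v'})"
  using assms unfolding glue_V_def glue_map_def Plus_def by auto

theorem mainTheorem10:
  fixes VG :: "'a set" and EG :: "'a \<Rightarrow> 'a \<Rightarrow> bool"
    and VH :: "'b set" and EH :: "'b \<Rightarrow> 'b \<Rightarrow> bool"
    and u v :: 'a and u' v' :: 'b
  assumes "simple_graph VG EG" and "well_bicovered VG EG" and "EG u v"
    and "simple_graph VH EH" and "bipartite VH EH" and "EH u' v'"
  shows "well_bicovered (glue_V VG u v VH u' v') (glue_E EG u v EH u' v')"
proof -
  have G: "finite VG" "u \<in> VG" "v \<in> VG" "u \<noteq> v"
    using assms(1,3) unfolding simple_graph_def by metis+
  have H: "finite VH" "u' \<in> VH" "v' \<in> VH" "u' \<noteq> v'" "\<And>x y. EH x y \<Longrightarrow> x \<in> VH \<and> y \<in> VH"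
    using assms(4,6) unfolding simple_graph_def by metis+
  show ?thesis
  proof (rule well_bicovered_Plus)
    show "glue_V VG u v VH u' v' = VG <+> (VH - {u', v'})"
      using G H by (intro glue_V_eq_Plus)
    show "induced_bipartite (glue_E EG u v EH u' v') S \<longleftrightarrow> induced_bipartite EG (Inl -` S)" for S
      using assms(3,5,6) G(4) H(4,5) by (intro induced_bipartite_glue_iff)
  qed (use G H assms(2) in auto)
qed

end
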